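(* For any poset $(P,\succ)$ with $|P|=n$ and width $w$, the expected weight of the randomly constructed ternary search tree for $(P,\succ)$ is $O(n(\log n+w))$; equivalently, the expected number of queries used by the randomized construction is $O(n(\log n+w))$.
   Context: A poset $(P,\succ)$ consists of a set $P$ and an irreflexive, transitive relation $\succ$; its width is the maximum size of a set of mutually incomparable elements ($x,y$ incomparable if neither $x\succ y$ nor $y\succ x$). A ternary search tree for a poset $(P,\succ)$ is an empty node if $P=\emptyset$; otherwise it consists of a root holding an element $x\in P$ and left, middle, and right subtrees that are ternary search trees for the restrictions of $\succ$ to $\{y: x\succ y\}$, $\{y\ne x: x,y \text{ incomparable}\}$, and $\{y: y\succ x\}$ respectively. The randomized construction picks the root element uniformly at random from $P$, queries the oracle to compare each of the other $n-1$ elements with it to form the three sets, and recurses on each set independently. The weight of an internal node is the total number of internal nodes in its three subtrees; the weight of the tree is the sum of the weights of all internal nodes (this equals the number of queries made by the construction). Logarithms are base $2$. *)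

theory Defs
  imports "HOL-Probability.Probability"
begin

datatype 'a ttree = Leaf | Node "'a ttree" 'a "'a ttree" "'a ttree"

fun internal_nodes :: "'a ttree \<Rightarrow> nat" where
  "internal_nodes Leaf = 0"
| "internal_nodes (Node l x m r) = internal_nodes l + internal_nodes m + internal_nodes r + 1"

fun tree_weight :: "'a ttree \<Rightarrow> nat" where
  "tree_weight Leaf = 0"
| "tree_weight (Node l x m r) =
     (internal_nodes l + internal_nodes m + internal_nodes r)
     + tree_weight l + tree_weight m + tree_weight r"

text \<open>A strict poset on the carrier P: the relation \<open>gt x y\<close> means x \<succ> y;
  irreflexive and transitive on P.\<close>
definition strict_poset_on :: "'a set \<Rightarrow> ('a \<Rightarrow> 'a \<Rightarrow> bool) \<Rightarrow> bool" where
  "strict_poset_on P gt \<longleftrightarrow>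
     (\<forall>x\<in>P. \<not> gt x x) \<and> (\<forall>x\<in>P. \<forall>y\<in>P. \<forall>z\<in>P. gt x y \<longrightarrow> gt y z \<longrightarrow> gt x z)"

definition incomparable :: "('a \<Rightarrow> 'a \<Rightarrow> bool) \<Rightarrow> 'a \<Rightarrow> 'a \<Rightarrow> bool" where
  "incomparable gt x y \<longleftrightarrow> \<not> gt x y \<and> \<not> gt y x"

definition antichain_in :: "'a set \<Rightarrow> ('a \<Rightarrow> 'a \<Rightarrow> bool) \<Rightarrow> 'a set \<Rightarrow> bool" where
  "antichain_in P gt A \<longleftrightarrow> A \<subseteq> P \<and> (\<forall>x\<in>A. \<forall>y\<in>A. x \<noteq> y \<longrightarrow> incomparable gt x y)"

definition poset_width :: "'a set \<Rightarrow> ('a \<Rightarrow> 'a \<Rightarrow> bool) \<Rightarrow> nat" where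
  "poset_width P gt = Max (card ` {A. antichain_in P gt A})"

text \<open>Randomized construction with a fuel parameter (the fuel only needs to be at
  least card P; every recursive call is on a set not containing the root).\<close>
fun random_tst_fuel :: "nat \<Rightarrow> ('a \<Rightarrow> 'a \<Rightarrow> bool) \<Rightarrow> 'a set \<Rightarrow> 'a ttree pmf" where
  "random_tst_fuel 0 gt P = return_pmf Leaf"
| "random_tst_fuel (Suc k) gt P =
     (if P = {} then return_pmf Leaf else
      do { x \<leftarrow> pmf_of_set P;
           l \<leftarrow> random_tst_fuel k gt {y\<in>P. gt x y};
           m \<leftarrow> random_tst_fuel k gt {y\<in>P. y \<noteq> x \<and> incomparable gt x y};
           r \<leftarrow> random_tst_fuel k gt {y\<in>P. gt y x};
           return_pmf (Node l x m r) })"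

definition random_tst :: "('a \<Rightarrow> 'a \<Rightarrow> bool) \<Rightarrow> 'a set \<Rightarrow> 'a ttree pmf" where
  "random_tst gt P = random_tst_fuel (card P) gt P"

end

theory Submission
  imports Defs
begin

text \<open>The weight counts, for every element y, the pivots that y is compared with. Give each
  element y of a subproblem S the potential
  log (1 + #elements above y) + log (1 + #elements below y) + width S,
  and let the potential of S be the sum over its elements. By induction on the recursion,
  the expected weight is at most the potential: after a uniformly random pivot x \<noteq> y,
  the comparison of y with x plus the potential of y in its new subproblem is on average
  at most the old potential of y. If x is incomparable to y, the width drops by one, since
  x extends every antichain of the middle subproblem. If x is above y, the set above y
  shrinks to the elements of that set lying below x; as the relation "below" on a set of
  size a has at most a(a-1)/2 pairs, concavity of the logarithm makes the average loss at
  least 1. The potential of P is at most 2 n (log n + w).\<close>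

subsection \<open>Counting and concavity\<close>

lemma sum_card_asym_le:
  assumes "finite A"
    and asym: "\<And>a b. a \<in> A \<Longrightarrow> b \<in> A \<Longrightarrow> r a b \<Longrightarrow> \<not> r b a"
    and irrefl: "\<And>a. a \<in> A \<Longrightarrow> \<not> r a a"
  shows "2 * (\<Sum>x\<in>A. card {u\<in>A. r x u}) \<le> card A * card A - card A"
proof -
  let ?X = "{p\<in>A \<times> A. r (fst p) (snd p)}" and ?Y = "{p\<in>A \<times> A. r (snd p) (fst p)}"
  have fin: "finite (A \<times> A)" using assms(1) by simp
  have "?X = Sigma A (\<lambda>x. {u\<in>A. r x u})" by auto
  then have "(\<Sum>x\<in>A. card {u\<in>A. r x u}) = card ?X" using assms(1) by (simp add: card_SigmaI)
  moreover have "card ?Y = card ?X"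
    by (rule bij_betw_same_card[of "\<lambda>(a, b). (b, a)"]) (auto simp: bij_betw_def inj_on_def image_def)
  moreover have "card (?X \<union> ?Y) = card ?X + card ?Y"
  proof (rule card_Un_disjoint)
    show "finite ?X" "finite ?Y" by (rule finite_subset[OF _ fin], blast)+
    show "?X \<inter> ?Y = {}" by (auto dest: asym)
  qed
  moreover have "card (?X \<union> ?Y) \<le> card A * card A - card A"
  proof -
    have "?X \<union> ?Y \<subseteq> A \<times> A - Id_on A" using irrefl by (auto simp: Id_on_def)
    then have "card (?X \<union> ?Y) \<le> card (A \<times> A - Id_on A)"
      by (intro card_mono) (use fin in auto)
    moreover have "Id_on A = (\<lambda>x. (x, x)) ` A" by auto
    then have "card (Id_on A) = card A" by (simp add: card_image inj_on_def)
    moreover have "Id_on A \<subseteq> A \<times> A" by auto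
    ultimately show ?thesis
      using fin by (simp add: card_Diff_subset finite_subset card_cartesian_product)
  qed
  ultimately show ?thesis by linarith
qed

lemma ln_le_tangent:
  fixes m t :: real
  assumes "m > 0" "t > 0"
  shows "ln t \<le> ln m + t / m - 1"
  using ln_le_minus_one[of "t / m"] assms by (simp add: ln_div)

lemma sum_log_le_of_sum_le:
  fixes a :: "'a \<Rightarrow> nat"
  assumes "finite A" "2 * (\<Sum>x\<in>A. a x) \<le> card A * card A - card A"
  shows "(\<Sum>x\<in>A. log 2 (real (a x) + 1)) \<le> card A * (log 2 (real (card A) + 1) - 1)"
proof (cases "A = {}")
  case False
  define k where "k = real (card A)"
  define m where "m = (k + 1) / 2"
  have "k \<ge> 1" using False assms(1) by (simp add: k_def Suc_leI card_gt_0_iff)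
  then have "m > 0" by (simp add: m_def)
  have "2 * (\<Sum>x\<in>A. real (a x)) \<le> k * k - k"
  proof -
    have "real (2 * (\<Sum>x\<in>A. a x)) \<le> real (card A * card A - card A)"
      using assms(2) by linarith
    then show ?thesis by (simp add: k_def of_nat_diff)
  qed
  then have "(\<Sum>x\<in>A. real (a x)) + k \<le> k * m"
    by (simp add: m_def field_simps)
  then have mean: "(\<Sum>x\<in>A. (real (a x) + 1) / m) \<le> k"
    using \<open>m > 0\<close> by (simp add: sum_divide_distrib[symmetric] sum.distrib k_def pos_divide_le_eq)
  \<comment> \<open>Jensen: bound ln by its tangent line at the mean m\<close>
  have "(\<Sum>x\<in>A. ln (real (a x) + 1)) \<le> (\<Sum>x\<in>A. ln m - 1 + (real (a x) + 1) / m)"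
    using ln_le_tangent[OF \<open>m > 0\<close>] by (intro sum_mono) (simp add: algebra_simps)
  also have "\<dots> = k * (ln m - 1) + (\<Sum>x\<in>A. (real (a x) + 1) / m)"
    by (simp add: sum.distrib k_def)
  finally have "(\<Sum>x\<in>A. ln (real (a x) + 1)) \<le> k * ln m"
    using mean by (simp add: algebra_simps)
  then have "(\<Sum>x\<in>A. ln (real (a x) + 1)) / ln 2 \<le> k * ln m / ln 2"
    by (rule divide_right_mono) simp
  then have "(\<Sum>x\<in>A. log 2 (real (a x) + 1)) \<le> k * log 2 m"
    by (simp only: log_def sum_divide_distrib[symmetric] times_divide_eq_right)
  then show ?thesis
    using \<open>k \<ge> 1\<close> by (simp add: m_def log_divide k_def)
qed simp

lemma sum_log_card_asym_le:
  assumes "finite A"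
    and "\<And>a b. a \<in> A \<Longrightarrow> b \<in> A \<Longrightarrow> r a b \<Longrightarrow> \<not> r b a"
    and "\<And>a. a \<in> A \<Longrightarrow> \<not> r a a"
  shows "(\<Sum>x\<in>A. log 2 (real (card {u\<in>A. r x u}) + 1))
    \<le> card A * (log 2 (real (card A) + 1) - 1)"
proof -
  have "2 * (\<Sum>x\<in>A. card {u\<in>A. r x u}) \<le> card A * card A - card A"
    by (rule sum_card_asym_le) (use assms in auto)
  from sum_log_le_of_sum_le[OF assms(1) this] show ?thesis .
qed

subsection \<open>Strict posets and their width\<close>

lemma strict_poset_on_irrefl: "strict_poset_on P gt \<Longrightarrow> x \<in> P \<Longrightarrow> \<not> gt x x"
  unfolding strict_poset_on_def by blast

lemma strict_poset_on_trans:
  "strict_poset_on P gt \<Longrightarrow> x \<in> P \<Longrightarrow> y \<in> P \<Longrightarrow> z \<in> P \<Longrightarrow> gt x y \<Longrightarrow> gt y z \<Longrightarrow> gt x z"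
  unfolding strict_poset_on_def by blast

lemma strict_poset_on_asym:
  "strict_poset_on P gt \<Longrightarrow> x \<in> P \<Longrightarrow> y \<in> P \<Longrightarrow> gt x y \<Longrightarrow> \<not> gt y x"
  unfolding strict_poset_on_def by blast

lemma strict_poset_on_subset:
  "strict_poset_on P gt \<Longrightarrow> S \<subseteq> P \<Longrightarrow> strict_poset_on S gt"
  unfolding strict_poset_on_def by blast

lemma finite_antichains: "finite P \<Longrightarrow> finite {A. antichain_in P gt A}"
  by (rule finite_subset[of _ "Pow P"]) (auto simp: antichain_in_def)

lemma card_antichain_le_width:
  assumes "finite P" "antichain_in P gt A"
  shows "card A \<le> poset_width P gt"
  unfolding poset_width_def using assms finite_antichains[OF assms(1)] by (intro Max_ge) auto

lemma antichain_of_width: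
  assumes "finite P"
  obtains A where "antichain_in P gt A" "card A = poset_width P gt"
proof -
  have "{} \<in> {A. antichain_in P gt A}" by (simp add: antichain_in_def)
  then have "poset_width P gt \<in> card ` {A. antichain_in P gt A}"
    unfolding poset_width_def using finite_antichains[OF assms] by (intro Max_in) auto
  then show ?thesis using that by auto
qed

lemma poset_width_mono:
  assumes "finite P" "S \<subseteq> P"
  shows "poset_width S gt \<le> poset_width P gt"
proof -
  obtain A where A: "antichain_in S gt A" "card A = poset_width S gt"
    using antichain_of_width finite_subset[OF assms(2,1)] by blast
  then have "antichain_in P gt A" using assms(2) unfolding antichain_in_def by auto
  then have "card A \<le> poset_width P gt" by (rule card_antichain_le_width[OF assms(1)])
  then show ?thesis using A(2) by simp
qed

abbreviation down_set :: "('a \<Rightarrow> 'a \<Rightarrow> bool) \<Rightarrow> 'a set \<Rightarrow> 'a \<Rightarrow> 'a set" where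
  "down_set gt S x \<equiv> {u\<in>S. gt x u}"

abbreviation up_set :: "('a \<Rightarrow> 'a \<Rightarrow> bool) \<Rightarrow> 'a set \<Rightarrow> 'a \<Rightarrow> 'a set" where
  "up_set gt S x \<equiv> {u\<in>S. gt u x}"

abbreviation incomparable_set :: "('a \<Rightarrow> 'a \<Rightarrow> bool) \<Rightarrow> 'a set \<Rightarrow> 'a \<Rightarrow> 'a set" where
  "incomparable_set gt S x \<equiv> {u\<in>S. u \<noteq> x \<and> incomparable gt x u}"

lemma poset_width_incomparable_set:
  assumes "finite S" "x \<in> S"
  shows "poset_width (incomparable_set gt S x) gt + 1 \<le> poset_width S gt"
proof -
  obtain A where A: "antichain_in (incomparable_set gt S x) gt A"
      "card A = poset_width (incomparable_set gt S x) gt"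
    using antichain_of_width[of "incomparable_set gt S x" gt] assms(1) by auto
  have "A \<subseteq> S" "x \<notin> A" using A(1) unfolding antichain_in_def by auto
  have "antichain_in S gt (insert x A)"
    using A(1) assms(2) unfolding antichain_in_def incomparable_def by auto
  then have "card (insert x A) \<le> poset_width S gt" by (rule card_antichain_le_width[OF assms(1)])
  moreover have "finite A" using \<open>A \<subseteq> S\<close> assms(1) finite_subset by blast
  ultimately show ?thesis using \<open>x \<notin> A\<close> A(2) by simp
qed

lemma pivot_partition:
  assumes "strict_poset_on S gt" "x \<in> S"
  shows "S - {x} = down_set gt S x \<union> incomparable_set gt S x \<union> up_set gt S x"
    and "down_set gt S x \<inter> incomparable_set gt S x = {}"
    and "(down_set gt S x \<union> incomparable_set gt S x) \<inter> up_set gt S x = {}"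
  using assms strict_poset_on_irrefl[OF assms] strict_poset_on_asym[OF assms(1,2)]
  by (auto simp: incomparable_def)

lemma card_pivot_partition:
  assumes "strict_poset_on S gt" "finite S" "x \<in> S"
  shows "card (down_set gt S x) + card (incomparable_set gt S x) + card (up_set gt S x)
    = card S - 1"
proof -
  have "card S - 1 = card (S - {x})" using assms(2,3) by simp
  also have "\<dots> = card (down_set gt S x) + card (incomparable_set gt S x) + card (up_set gt S x)"
    unfolding pivot_partition(1)[OF assms(1,3)] using pivot_partition(2,3)[OF assms(1,3)] assms(2)
    by (simp add: card_Un_disjoint)
  finally show ?thesis by simp
qed

definition subproblem :: "('a \<Rightarrow> 'a \<Rightarrow> bool) \<Rightarrow> 'a set \<Rightarrow> 'a \<Rightarrow> 'a \<Rightarrow> 'a set" where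
  "subproblem gt S x y =
     (if gt x y then down_set gt S x else if gt y x then up_set gt S x else incomparable_set gt S x)"

subsection \<open>The potential\<close>

definition node_potential :: "('a \<Rightarrow> 'a \<Rightarrow> bool) \<Rightarrow> 'a set \<Rightarrow> 'a \<Rightarrow> real" where
  "node_potential gt S y =
     log 2 (real (card (up_set gt S y)) + 1) + log 2 (real (card (down_set gt S y)) + 1)
     + real (poset_width S gt)"

definition potential :: "('a \<Rightarrow> 'a \<Rightarrow> bool) \<Rightarrow> 'a set \<Rightarrow> real" where
  "potential gt S = (\<Sum>y\<in>S. node_potential gt S y)"

lemma node_potential_nonneg: "node_potential gt S y \<ge> 0"
  by (simp add: node_potential_def)

lemma potential_nonneg: "potential gt S \<ge> 0"
  by (simp add: potential_def sum_nonneg node_potential_nonneg)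

lemma sum_pivots_above_node_potential_le:
  assumes po: "strict_poset_on S gt" and fin: "finite S" and yS: "y \<in> S"
  shows "(\<Sum>x\<in>up_set gt S y. 1 + node_potential gt (subproblem gt S x y) y)
    \<le> card (up_set gt S y) * node_potential gt S y"
proof -
  let ?U = "up_set gt S y" and ?D = "down_set gt S y"
  define c where "c = 1 + log 2 (real (card ?D) + 1) + real (poset_width S gt)"
  have pivot: "1 + node_potential gt (subproblem gt S x y) y
      \<le> c + log 2 (real (card {u\<in>?U. gt x u}) + 1)" if "x \<in> ?U" for x
  proof -
    from that have "gt x y" "x \<in> S" by auto
    then have "subproblem gt S x y = down_set gt S x" by (simp add: subproblem_def)
    moreover have "up_set gt (down_set gt S x) y = {u\<in>?U. gt x u}" by auto
    moreover have "down_set gt (down_set gt S x) y = ?D"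
      using strict_poset_on_trans[OF po \<open>x \<in> S\<close> yS _ \<open>gt x y\<close>] by blast
    moreover have "poset_width (down_set gt S x) gt \<le> poset_width S gt"
      by (rule poset_width_mono[OF fin]) auto
    ultimately show ?thesis by (simp add: node_potential_def c_def)
  qed
  have log_bound: "(\<Sum>x\<in>?U. log 2 (real (card {u\<in>?U. gt x u}) + 1))
      \<le> card ?U * (log 2 (real (card ?U) + 1) - 1)"
    by (rule sum_log_card_asym_le)
      (auto simp: fin dest: strict_poset_on_asym[OF po] strict_poset_on_irrefl[OF po])
  have "(\<Sum>x\<in>?U. 1 + node_potential gt (subproblem gt S x y) y)
      \<le> (\<Sum>x\<in>?U. c + log 2 (real (card {u\<in>?U. gt x u}) + 1))"
    by (rule sum_mono) (rule pivot)
  also have "\<dots> = card ?U * c + (\<Sum>x\<in>?U. log 2 (real (card {u\<in>?U. gt x u}) + 1))"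
    by (simp add: sum.distrib)
  also have "\<dots> \<le> card ?U * c + card ?U * (log 2 (real (card ?U) + 1) - 1)"
    using log_bound by simp
  also have "\<dots> = card ?U * node_potential gt S y"
    by (simp add: node_potential_def c_def algebra_simps)
  finally show ?thesis .
qed

lemma sum_pivots_below_node_potential_le:
  assumes po: "strict_poset_on S gt" and fin: "finite S" and yS: "y \<in> S"
  shows "(\<Sum>x\<in>down_set gt S y. 1 + node_potential gt (subproblem gt S x y) y)
    \<le> card (down_set gt S y) * node_potential gt S y"
proof -
  let ?U = "up_set gt S y" and ?D = "down_set gt S y"
  define c where "c = 1 + log 2 (real (card ?U) + 1) + real (poset_width S gt)"
  have pivot: "1 + node_potential gt (subproblem gt S x y) y
      \<le> c + log 2 (real (card {u\<in>?D. gt u x}) + 1)" if "x \<in> ?D" for x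
  proof -
    from that have "gt y x" "x \<in> S" by auto
    then have "subproblem gt S x y = up_set gt S x"
      using strict_poset_on_asym[OF po yS] by (auto simp: subproblem_def)
    moreover have "down_set gt (up_set gt S x) y = {u\<in>?D. gt u x}" by auto
    moreover have "up_set gt (up_set gt S x) y = ?U"
      using strict_poset_on_trans[OF po _ yS \<open>x \<in> S\<close> _ \<open>gt y x\<close>] by blast
    moreover have "poset_width (up_set gt S x) gt \<le> poset_width S gt"
      by (rule poset_width_mono[OF fin]) auto
    ultimately show ?thesis by (simp add: node_potential_def c_def)
  qed
  have log_bound: "(\<Sum>x\<in>?D. log 2 (real (card {u\<in>?D. gt u x}) + 1))
      \<le> card ?D * (log 2 (real (card ?D) + 1) - 1)"
    by (rule sum_log_card_asym_le[where r = "\<lambda>x u. gt u x"])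
      (auto simp: fin dest: strict_poset_on_asym[OF po] strict_poset_on_irrefl[OF po])
  have "(\<Sum>x\<in>?D. 1 + node_potential gt (subproblem gt S x y) y)
      \<le> (\<Sum>x\<in>?D. c + log 2 (real (card {u\<in>?D. gt u x}) + 1))"
    by (rule sum_mono) (rule pivot)
  also have "\<dots> = card ?D * c + (\<Sum>x\<in>?D. log 2 (real (card {u\<in>?D. gt u x}) + 1))"
    by (simp add: sum.distrib)
  also have "\<dots> \<le> card ?D * c + card ?D * (log 2 (real (card ?D) + 1) - 1)"
    using log_bound by simp
  also have "\<dots> = card ?D * node_potential gt S y"
    by (simp add: node_potential_def c_def algebra_simps)
  finally show ?thesis .
qed

lemma incomparable_pivot_node_potential_le:
  assumes fin: "finite S" and "x \<in> incomparable_set gt S y"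
  shows "1 + node_potential gt (subproblem gt S x y) y \<le> node_potential gt S y"
proof -
  from assms(2) have "x \<in> S" "\<not> gt x y" "\<not> gt y x" by (auto simp: incomparable_def)
  then have sub: "subproblem gt S x y = incomparable_set gt S x" by (simp add: subproblem_def)
  have log_mono: "log 2 (real a + 1) \<le> log 2 (real b + 1)" if "a \<le> b" for a b :: nat
    using that by simp
  have "log 2 (real (card (up_set gt (incomparable_set gt S x) y)) + 1)
      \<le> log 2 (real (card (up_set gt S y)) + 1)"
    "log 2 (real (card (down_set gt (incomparable_set gt S x) y)) + 1)
      \<le> log 2 (real (card (down_set gt S y)) + 1)"
    by (rule log_mono, rule card_mono; use fin in auto)+
  moreover have "poset_width (incomparable_set gt S x) gt + 1 \<le> poset_width S gt"
    by (rule poset_width_incomparable_set[OF fin \<open>x \<in> S\<close>])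
  ultimately show ?thesis unfolding sub node_potential_def by linarith
qed

lemma sum_pivots_node_potential_le:
  assumes po: "strict_poset_on S gt" and fin: "finite S" and yS: "y \<in> S"
  shows "(\<Sum>x\<in>S - {y}. 1 + node_potential gt (subproblem gt S x y) y)
    \<le> card (S - {y}) * node_potential gt S y"
proof -
  let ?f = "\<lambda>x. 1 + node_potential gt (subproblem gt S x y) y"
  let ?D = "down_set gt S y" and ?I = "incomparable_set gt S y" and ?U = "up_set gt S y"
  have "(\<Sum>x\<in>?I. ?f x) \<le> card ?I * node_potential gt S y"
    using sum_mono[of ?I ?f "\<lambda>_. node_potential gt S y"] incomparable_pivot_node_potential_le[OF fin]
    by simp
  then have "(\<Sum>x\<in>?D. ?f x) + (\<Sum>x\<in>?I. ?f x) + (\<Sum>x\<in>?U. ?f x)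
      \<le> (card ?D + card ?I + card ?U) * node_potential gt S y"
    using sum_pivots_below_node_potential_le[OF assms] sum_pivots_above_node_potential_le[OF assms]
    by (simp add: algebra_simps)
  moreover have "finite ?D" "finite ?I" "finite ?U" using fin by auto
  ultimately show ?thesis
    unfolding pivot_partition(1)[OF po yS] using pivot_partition(2,3)[OF po yS]
    by (simp add: sum.union_disjoint card_Un_disjoint)
qed

lemma potential_split_at_pivot:
  assumes po: "strict_poset_on S gt" and fin: "finite S" and xS: "x \<in> S"
  shows "real (card S - 1) + potential gt (down_set gt S x) + potential gt (incomparable_set gt S x)
      + potential gt (up_set gt S x)
    = (\<Sum>y\<in>S - {x}. 1 + node_potential gt (subproblem gt S x y) y)"
proof -
  let ?f = "\<lambda>y. node_potential gt (subproblem gt S x y) y"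
  let ?D = "down_set gt S x" and ?I = "incomparable_set gt S x" and ?U = "up_set gt S x"
  have "potential gt ?D = (\<Sum>y\<in>?D. ?f y)"
    unfolding potential_def by (rule sum.cong) (auto simp: subproblem_def)
  moreover have "potential gt ?I = (\<Sum>y\<in>?I. ?f y)"
    unfolding potential_def by (rule sum.cong) (auto simp: subproblem_def incomparable_def)
  moreover have "potential gt ?U = (\<Sum>y\<in>?U. ?f y)"
    unfolding potential_def
    by (rule sum.cong) (auto simp: subproblem_def dest: strict_poset_on_asym[OF po xS])
  moreover have "(\<Sum>y\<in>S - {x}. ?f y) = (\<Sum>y\<in>?D. ?f y) + (\<Sum>y\<in>?I. ?f y) + (\<Sum>y\<in>?U. ?f y)"
    unfolding pivot_partition(1)[OF po xS] using pivot_partition(2,3)[OF po xS] fin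
    by (simp add: sum.union_disjoint)
  ultimately show ?thesis using fin xS by (simp add: sum.distrib)
qed

lemma sum_pivots_potential_le:
  assumes po: "strict_poset_on S gt" and fin: "finite S"
  shows "(\<Sum>x\<in>S. \<Sum>y\<in>S - {x}. 1 + node_potential gt (subproblem gt S x y) y)
    \<le> card S * potential gt S"
proof -
  let ?f = "\<lambda>x y. 1 + node_potential gt (subproblem gt S x y) y"
  have "(\<Sum>x\<in>S. \<Sum>y\<in>S - {x}. ?f x y) = (\<Sum>x\<in>S. \<Sum>y\<in>{y\<in>S. x \<noteq> y}. ?f x y)"
    by (intro sum.cong) auto
  also have "\<dots> = (\<Sum>y\<in>S. \<Sum>x\<in>{x\<in>S. x \<noteq> y}. ?f x y)"
    by (rule sum.swap_restrict[OF fin fin])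
  also have "\<dots> = (\<Sum>y\<in>S. \<Sum>x\<in>S - {y}. ?f x y)"
    by (intro sum.cong) auto
  also have "\<dots> \<le> (\<Sum>y\<in>S. card S * node_potential gt S y)"
  proof (rule sum_mono)
    fix y assume "y \<in> S"
    have "card (S - {y}) * node_potential gt S y \<le> card S * node_potential gt S y"
      using fin by (intro mult_right_mono node_potential_nonneg) (simp add: card_mono)
    with sum_pivots_node_potential_le[OF po fin \<open>y \<in> S\<close>]
    show "(\<Sum>x\<in>S - {y}. ?f x y) \<le> card S * node_potential gt S y" by linarith
  qed
  also have "\<dots> = card S * potential gt S" by (simp add: potential_def sum_distrib_left)
  finally show ?thesis .
qed

subsection \<open>Expected weight of the random tree\<close>

lemma nn_integral_pmf_le_add:
  fixes p :: "'b pmf" and h f :: "'b \<Rightarrow> ennreal"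
  assumes "\<And>x. x \<in> set_pmf p \<Longrightarrow> h x \<le> c + f x" and "(\<integral>\<^sup>+x. f x \<partial>measure_pmf p) \<le> a"
  shows "(\<integral>\<^sup>+x. h x \<partial>measure_pmf p) \<le> c + a"
proof -
  have "(\<integral>\<^sup>+x. h x \<partial>measure_pmf p) \<le> (\<integral>\<^sup>+x. c + f x \<partial>measure_pmf p)"
    by (rule nn_integral_mono_AE) (use assms(1) in \<open>auto simp: AE_measure_pmf_iff\<close>)
  also have "\<dots> = c + (\<integral>\<^sup>+x. f x \<partial>measure_pmf p)"
    by (simp add: nn_integral_add measure_pmf.emeasure_space_1)
  also have "\<dots> \<le> c + a" using assms(2) by (rule add_left_mono)
  finally show ?thesis .
qed

lemma nn_integral_pmf3_le:
  fixes h :: "'a \<Rightarrow> 'b \<Rightarrow> 'c \<Rightarrow> ennreal"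
  assumes bound: "\<And>a b c. a \<in> set_pmf p \<Longrightarrow> b \<in> set_pmf q \<Longrightarrow> c \<in> set_pmf r \<Longrightarrow>
      h a b c \<le> d + f a + g b + k c"
    and "(\<integral>\<^sup>+a. f a \<partial>measure_pmf p) \<le> A"
    and "(\<integral>\<^sup>+b. g b \<partial>measure_pmf q) \<le> B"
    and "(\<integral>\<^sup>+c. k c \<partial>measure_pmf r) \<le> C"
  shows "(\<integral>\<^sup>+a. \<integral>\<^sup>+b. \<integral>\<^sup>+c. h a b c \<partial>measure_pmf r \<partial>measure_pmf q \<partial>measure_pmf p) \<le> d + A + B + C"
proof -
  have "(\<integral>\<^sup>+a. \<integral>\<^sup>+b. \<integral>\<^sup>+c. h a b c \<partial>measure_pmf r \<partial>measure_pmf q \<partial>measure_pmf p) \<le> (d + B + C) + A"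
  proof (rule nn_integral_pmf_le_add[OF _ assms(2)])
    fix a assume a: "a \<in> set_pmf p"
    have "(\<integral>\<^sup>+b. \<integral>\<^sup>+c. h a b c \<partial>measure_pmf r \<partial>measure_pmf q) \<le> (d + f a + C) + B"
    proof (rule nn_integral_pmf_le_add[OF _ assms(3)])
      fix b assume b: "b \<in> set_pmf q"
      have "(\<integral>\<^sup>+c. h a b c \<partial>measure_pmf r) \<le> (d + f a + g b) + C"
        by (rule nn_integral_pmf_le_add[OF _ assms(4)]) (rule bound[OF a b])
      then show "(\<integral>\<^sup>+c. h a b c \<partial>measure_pmf r) \<le> (d + f a + C) + g b"
        by (simp add: ac_simps)
    qed
    then show "(\<integral>\<^sup>+b. \<integral>\<^sup>+c. h a b c \<partial>measure_pmf r \<partial>measure_pmf q) \<le> (d + B + C) + f a"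
      by (simp add: ac_simps)
  qed
  then show ?thesis by (simp add: ac_simps)
qed

lemma nn_integral_pmf_of_set_le:
  fixes F :: "'a \<Rightarrow> real" and B :: real
  assumes "finite S" "S \<noteq> {}" "\<And>x. x \<in> S \<Longrightarrow> F x \<ge> 0" "(\<Sum>x\<in>S. F x) \<le> card S * B"
  shows "(\<integral>\<^sup>+x. ennreal (F x) \<partial>measure_pmf (pmf_of_set S)) \<le> ennreal B"
proof -
  have "card S > 0" using assms(1,2) by (simp add: card_gt_0_iff)
  have "(\<integral>\<^sup>+x. ennreal (F x) \<partial>measure_pmf (pmf_of_set S)) = (\<Sum>x\<in>S. ennreal (F x)) / of_nat (card S)"
    using assms(1,2) by (simp add: nn_integral_pmf_of_set)
  also have "\<dots> = ennreal ((\<Sum>x\<in>S. F x) / card S)"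
    using assms(3) \<open>card S > 0\<close>
    by (simp add: ennreal_of_nat_eq_real_of_nat divide_ennreal sum_nonneg)
  also have "\<dots> \<le> ennreal B"
    using assms(4) \<open>card S > 0\<close> by (intro ennreal_leI) (simp add: pos_divide_le_eq mult.commute)
  finally show ?thesis .
qed

lemma internal_nodes_random_tst_fuel_le:
  assumes "strict_poset_on S gt" "finite S" "t \<in> set_pmf (random_tst_fuel k gt S)"
  shows "internal_nodes t \<le> card S"
  using assms
proof (induction k arbitrary: S t)
  case (Suc k)
  show ?case
  proof (cases "S = {}")
    case False
    then obtain x l m r where "x \<in> S" and t: "t = Node l x m r"
      and l: "l \<in> set_pmf (random_tst_fuel k gt (down_set gt S x))"
      and m: "m \<in> set_pmf (random_tst_fuel k gt (incomparable_set gt S x))"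
      and r: "r \<in> set_pmf (random_tst_fuel k gt (up_set gt S x))"
      using Suc.prems(2,3) by auto
    have sub: "strict_poset_on T gt" "finite T" if "T \<subseteq> S" for T
      using strict_poset_on_subset[OF Suc.prems(1) that] finite_subset[OF that Suc.prems(2)] .
    have "internal_nodes l \<le> card (down_set gt S x)"
      "internal_nodes m \<le> card (incomparable_set gt S x)"
      "internal_nodes r \<le> card (up_set gt S x)"
      by (rule Suc.IH[OF sub]; use l m r in auto)+
    moreover have "card S \<ge> 1" using \<open>x \<in> S\<close> Suc.prems(2) by (auto simp: Suc_le_eq card_gt_0_iff)
    ultimately show ?thesis
      using card_pivot_partition[OF Suc.prems(1,2) \<open>x \<in> S\<close>] t by simp
  qed (use Suc.prems in simp)
qed simp

lemma expected_weight_le_potential: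
  assumes "strict_poset_on S gt" "finite S"
  shows "(\<integral>\<^sup>+t. real (tree_weight t) \<partial>measure_pmf (random_tst_fuel k gt S)) \<le> potential gt S"
  using assms
proof (induction k arbitrary: S)
  case (Suc k)
  show ?case
  proof (cases "S = {}")
    case False
    let ?D = "\<lambda>x. down_set gt S x" and ?I = "\<lambda>x. incomparable_set gt S x"
      and ?U = "\<lambda>x. up_set gt S x"
    let ?T = "\<lambda>T. measure_pmf (random_tst_fuel k gt T)"
    define W where "W t = ennreal (real (tree_weight t))" for t :: "'a ttree"
    have sub: "strict_poset_on T gt" "finite T" if "T \<subseteq> S" for T
      using strict_poset_on_subset[OF Suc.prems(1) that] finite_subset[OF that Suc.prems(2)] .
    have node: "W (Node l x m r) \<le> ennreal (real (card S - 1)) + W l + W m + W r"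
      if "x \<in> S" "l \<in> set_pmf (random_tst_fuel k gt (?D x))"
        "m \<in> set_pmf (random_tst_fuel k gt (?I x))" "r \<in> set_pmf (random_tst_fuel k gt (?U x))"
      for x l m r
    proof -
      have "internal_nodes l \<le> card (?D x)" "internal_nodes m \<le> card (?I x)"
        "internal_nodes r \<le> card (?U x)"
        by (rule internal_nodes_random_tst_fuel_le[OF sub]; use that in auto)+
      then have "tree_weight (Node l x m r)
          \<le> (card S - 1) + tree_weight l + tree_weight m + tree_weight r"
        using card_pivot_partition[OF Suc.prems(1,2) \<open>x \<in> S\<close>] by simp
      then show ?thesis
        unfolding W_def by (simp add: ennreal_plus[symmetric] ennreal_leI del: ennreal_plus)
    qed
    have pivot: "(\<integral>\<^sup>+l. \<integral>\<^sup>+m. \<integral>\<^sup>+r. W (Node l x m r) \<partial>?T (?U x) \<partial>?T (?I x) \<partial>?T (?D x))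
        \<le> ennreal (\<Sum>y\<in>S - {x}. 1 + node_potential gt (subproblem gt S x y) y)" if "x \<in> S" for x
    proof -
      have "(\<integral>\<^sup>+l. \<integral>\<^sup>+m. \<integral>\<^sup>+r. W (Node l x m r) \<partial>?T (?U x) \<partial>?T (?I x) \<partial>?T (?D x))
          \<le> ennreal (real (card S - 1)) + ennreal (potential gt (?D x))
            + ennreal (potential gt (?I x)) + ennreal (potential gt (?U x))"
      proof (rule nn_integral_pmf3_le)
        show "W (Node l x m r) \<le> ennreal (real (card S - 1)) + W l + W m + W r"
          if "l \<in> set_pmf (random_tst_fuel k gt (?D x))" "m \<in> set_pmf (random_tst_fuel k gt (?I x))"
            "r \<in> set_pmf (random_tst_fuel k gt (?U x))" for l m r
          using node[OF \<open>x \<in> S\<close> that] .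
      qed (unfold W_def; rule Suc.IH[OF sub]; auto)+
      also have "\<dots> = ennreal (\<Sum>y\<in>S - {x}. 1 + node_potential gt (subproblem gt S x y) y)"
        unfolding potential_split_at_pivot[OF Suc.prems(1,2) that, symmetric]
        by (simp add: ennreal_plus potential_nonneg)
      finally show ?thesis .
    qed
    have "(\<integral>\<^sup>+t. W t \<partial>measure_pmf (random_tst_fuel (Suc k) gt S))
        = (\<integral>\<^sup>+x. (\<integral>\<^sup>+l. \<integral>\<^sup>+m. \<integral>\<^sup>+r. W (Node l x m r) \<partial>?T (?U x) \<partial>?T (?I x) \<partial>?T (?D x))
            \<partial>measure_pmf (pmf_of_set S))"
      using False by (simp add: W_def)
    also have "\<dots> \<le> (\<integral>\<^sup>+x. ennreal (\<Sum>y\<in>S - {x}. 1 + node_potential gt (subproblem gt S x y) y)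
        \<partial>measure_pmf (pmf_of_set S))"
      using pivot False Suc.prems(2) by (intro nn_integral_mono_AE) (auto simp: AE_measure_pmf_iff)
    also have "\<dots> \<le> potential gt S"
      by (rule nn_integral_pmf_of_set_le)
        (use False Suc.prems(2) sum_pivots_potential_le[OF Suc.prems] in
          \<open>auto intro!: sum_nonneg add_nonneg_nonneg node_potential_nonneg\<close>)
    finally show ?thesis unfolding W_def .
  qed simp
qed simp

lemma node_potential_le:
  assumes fin: "finite P" and po: "strict_poset_on P gt" and yP: "y \<in> P"
  shows "node_potential gt P y \<le> 2 * (log 2 (card P) + poset_width P gt)"
proof -
  have "card P \<ge> 1" using fin yP by (auto simp: Suc_le_eq card_gt_0_iff)
  have log_le: "log 2 (real (card T) + 1) \<le> log 2 (card P)" if "T \<subseteq> P - {y}" for T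
  proof -
    have "card T \<le> card (P - {y})" using that fin by (intro card_mono) auto
    then have "card T + 1 \<le> card P" using fin yP \<open>card P \<ge> 1\<close> by simp
    then show ?thesis by simp
  qed
  have "log 2 (real (card (up_set gt P y)) + 1) \<le> log 2 (card P)"
    "log 2 (real (card (down_set gt P y)) + 1) \<le> log 2 (card P)"
    using strict_poset_on_irrefl[OF po yP] by (intro log_le; auto)+
  moreover have "log 2 (card P) \<ge> 0" using \<open>card P \<ge> 1\<close> by simp
  ultimately show ?thesis unfolding node_potential_def by simp
qed

lemma potential_le:
  assumes "finite P" "strict_poset_on P gt"
  shows "potential gt P \<le> 2 * real (card P) * (log 2 (real (card P)) + real (poset_width P gt))"
proof -
  have "potential gt P \<le> (\<Sum>y\<in>P. 2 * (log 2 (card P) + poset_width P gt))"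
    unfolding potential_def by (intro sum_mono node_potential_le[OF assms])
  then show ?thesis by (simp add: algebra_simps)
qed

theorem theorem15:
  "\<exists>C>0. \<forall>(P :: nat set) (gt :: nat \<Rightarrow> nat \<Rightarrow> bool).
     finite P \<longrightarrow> strict_poset_on P gt \<longrightarrow>
     measure_pmf.expectation (random_tst gt P) (\<lambda>t. real (tree_weight t))
       \<le> C * real (card P) * (log 2 (real (card P)) + real (poset_width P gt))"
proof (intro exI[of _ 2] conjI allI impI)
  fix P :: "nat set" and gt :: "nat \<Rightarrow> nat \<Rightarrow> bool"
  assume fin: "finite P" and po: "strict_poset_on P gt"
  have "(\<integral>\<^sup>+t. real (tree_weight t) \<partial>measure_pmf (random_tst gt P)) \<le> potential gt P"
    unfolding random_tst_def by (rule expected_weight_le_potential[OF po fin])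
  then have "measure_pmf.expectation (random_tst gt P) (\<lambda>t. real (tree_weight t)) \<le> potential gt P"
    by (rule integral_real_bounded[OF potential_nonneg])
  also have "\<dots> \<le> 2 * real (card P) * (log 2 (real (card P)) + real (poset_width P gt))"
    by (rule potential_le[OF fin po])
  finally show "measure_pmf.expectation (random_tst gt P) (\<lambda>t. real (tree_weight t))
      \<le> 2 * real (card P) * (log 2 (real (card P)) + real (poset_width P gt))" .
qed simp

end
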